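(* Let $\mathcal H$ be a well-structured preconditioner set. For every $x\in\mathbb R^d$, $\|x\|_{\mathcal H,*}=\operatorname{Tr}[P_{\mathcal H}(xx^\top)]$.
   Context: $\mathcal S^d_+$ (resp. $\mathcal S^d_{++}$) denotes the set of real symmetric positive semidefinite (resp. positive definite) $d\times d$ matrices; $\langle A,B\rangle=\operatorname{Tr}(A^\top B)$. A set $\mathcal H\subseteq\mathcal S_+^d$ is a well-structured preconditioner set if $\mathcal H=\mathcal S_+^d\cap\mathcal K$ for some set $\mathcal K$ of real $d\times d$ matrices that is closed under scalar multiplication, matrix addition and matrix multiplication and contains the identity $I_d$. For $M\in\mathcal S^d_{++}$, $P_{\mathcal H}(M):=\arg\min_{H\in\mathcal H\cap\mathcal S^d_{++}}\langle M,H^{-1}\rangle+\operatorname{Tr}(H)$ (the minimizer exists and is unique); for singular $M\in\mathcal S^d_+$, $P_{\mathcal H}(M):=\lim_{\delta\downarrow0}P_{\mathcal H}(M+\delta I_d)$. For $H\in\mathcal S_+^d$, $\|x\|_H=\sqrt{x^\top Hx}$; $\|x\|_{\mathcal H}:=\sup_{H\in\mathcal H,\operatorname{Tr}(H)\le1}\|x\|_H$ and $\|y\|_{\mathcal H,*}:=\sup_{\|x\|_{\mathcal H}\le1}\langle x,y\rangle$. *)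

theory Defs
  imports "HOL-Analysis.Analysis"
begin

type_synonym 'n sqmat = "real^'n^'n"

definition frob_inner :: "'n::finite sqmat \<Rightarrow> 'n sqmat \<Rightarrow> real" where
  "frob_inner A B = trace (transpose A ** B)"

definition psd_set :: "'n::finite sqmat set" where
  "psd_set = {A. transpose A = A \<and> (\<forall>v. 0 \<le> v \<bullet> (A *v v))}"

definition pd_set :: "'n::finite sqmat set" where
  "pd_set = {A. transpose A = A \<and> (\<forall>v. v \<noteq> 0 \<longrightarrow> 0 < v \<bullet> (A *v v))}"

definition well_structured :: "'n::finite sqmat set \<Rightarrow> bool" where
  "well_structured \<H> \<longleftrightarrow> (\<exists>K :: 'n sqmat set.
      (\<forall>c A. A \<in> K \<longrightarrow> c *\<^sub>R A \<in> K) \<and>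
      (\<forall>A B. A \<in> K \<longrightarrow> B \<in> K \<longrightarrow> A + B \<in> K) \<and>
      (\<forall>A B. A \<in> K \<longrightarrow> B \<in> K \<longrightarrow> A ** B \<in> K) \<and>
      mat 1 \<in> K \<and>
      \<H> = psd_set \<inter> K)"

definition precond_obj :: "'n::finite sqmat \<Rightarrow> 'n sqmat \<Rightarrow> real" where
  "precond_obj M H = frob_inner M (matrix_inv H) + trace H"

definition P_pd :: "'n::finite sqmat set \<Rightarrow> 'n sqmat \<Rightarrow> 'n sqmat" where
  "P_pd \<H> M = (THE H. H \<in> \<H> \<inter> pd_set \<and>
      (\<forall>H' \<in> \<H> \<inter> pd_set. precond_obj M H \<le> precond_obj M H'))"

definition P_H :: "'n::finite sqmat set \<Rightarrow> 'n sqmat \<Rightarrow> 'n sqmat" where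
  "P_H \<H> M = (if M \<in> pd_set then P_pd \<H> M
     else Lim (at_right 0) (\<lambda>\<delta>::real. P_pd \<H> (M + \<delta> *\<^sub>R mat 1)))"

definition H_norm :: "'n::finite sqmat set \<Rightarrow> real^'n \<Rightarrow> real" where
  "H_norm \<H> x = Sup {sqrt (x \<bullet> (H *v x)) | H. H \<in> \<H> \<and> trace H \<le> 1}"

definition H_dual_norm :: "'n::finite sqmat set \<Rightarrow> real^'n \<Rightarrow> real" where
  "H_dual_norm \<H> y = Sup {x \<bullet> y | x. H_norm \<H> x \<le> 1}"

definition outer :: "real^'n \<Rightarrow> real^'n \<Rightarrow> real^'n^'n" where
  "outer x y = (\<chi> i j. x $ i * y $ j)"

end

theory Submission
  imports Defs
begin

text \<open>Passing from \<open>K\<close> to its transpose-closed part \<open>{X \<in> K. X\<^sup>T \<in> K}\<close> does not change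
  \<open>\<H>\<close>, so \<open>K\<close> may be taken closed under transposition. Let \<open>A\<close> be the orthogonal projection
  of \<open>x x\<^sup>T\<close> onto \<open>K\<close>: it is symmetric, \<open>\<langle>A, C\<rangle> = x\<^sup>T C x\<close> for \<open>C \<in> K\<close>, and every spectral
  function \<open>f(A)\<close> lies in \<open>K\<close> by polynomial interpolation on the spectrum. Testing
  \<open>\<langle>A, f(A)\<rangle> = x\<^sup>T f(A) x\<close> with indicator functions \<open>f\<close> shows \<open>A \<ge> 0\<close> and \<open>x \<bottom> ker A\<close>.

  For \<open>\<delta> > 0\<close> put \<open>H = (A + \<delta> I)\<^sup>1\<^sup>/\<^sup>2 \<in> \<H>\<close>. For \<open>G \<in> \<H>\<close> positive definite, \<open>G\<^sup>-\<^sup>1 \<in> K\<close>,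
  so the objective at \<open>x x\<^sup>T + \<delta> I\<close> equals \<open>tr(H\<^sup>2 G\<^sup>-\<^sup>1) + tr G\<close>, which exceeds its value
  \<open>2 tr H\<close> at \<open>H\<close> by \<open>tr((H - G) G\<^sup>-\<^sup>1 (H - G)) > 0\<close> unless \<open>G = H\<close>. Letting \<open>\<delta> \<rightarrow> 0\<close>
  gives \<open>P\<^sub>\<H>(x x\<^sup>T) = A\<^sup>1\<^sup>/\<^sup>2\<close>.

  For the dual norm, \<open>y\<^sub>0 = (A\<^sup>+)\<^sup>1\<^sup>/\<^sup>2 x\<close> has \<open>\<H>\<close>-norm at most 1 and \<open>\<langle>x, y\<^sub>0\<rangle> = tr A\<^sup>1\<^sup>/\<^sup>2\<close>;
  conversely Cauchy--Schwarz with the weights \<open>A\<^sup>\<plusminus>\<^sup>1\<^sup>/\<^sup>2\<close> and the preconditioner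
  \<open>A\<^sup>1\<^sup>/\<^sup>2 / tr A\<^sup>1\<^sup>/\<^sup>2 \<in> \<H>\<close> give \<open>\<langle>x, y\<rangle> \<le> tr A\<^sup>1\<^sup>/\<^sup>2\<close> whenever \<open>\<parallel>y\<parallel>\<^sub>\<H> \<le> 1\<close>.\<close>

lemma outer_mulv: "outer a b *v v = (b \<bullet> v) *\<^sub>R a"
  by (simp add: outer_def matrix_vector_mult_def inner_vec_def vec_eq_iff sum_distrib_left mult_ac)

lemma transpose_outer: "transpose (outer a b) = outer b a"
  by (simp add: outer_def transpose_def vec_eq_iff mult.commute)

lemma trace_outer: "trace (outer a b) = a \<bullet> b"
  by (simp add: outer_def trace_def inner_vec_def)

lemma inner_outer_self: "outer x x \<bullet> C = x \<bullet> (C *v x)"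
  by (simp add: outer_def inner_vec_def matrix_vector_mult_def sum_distrib_left mult_ac)

lemma sum_matrix_vector_mult: "(\<Sum>i\<in>S. F i) *v v = (\<Sum>i\<in>S. F i *v (v::real^'n))"
  by (induction S rule: infinite_finite_induct) (simp_all add: matrix_vector_mult_add_rdistrib)

lemma matrix_vector_mult_sum: "(X::real^'n^'m) *v (\<Sum>i\<in>S. f i) = (\<Sum>i\<in>S. X *v f i)"
  using linear_sum[OF matrix_vector_mul_linear[of X]] by simp

lemma trace_sum: "trace (\<Sum>i\<in>S. F i) = (\<Sum>i\<in>S. trace (F i :: real^'n^'n))"
  by (induction S rule: infinite_finite_induct) (simp_all add: trace_add trace_0[simplified])

lemma transpose_add: "transpose (A + B) = transpose A + transpose (B::real^'n^'m)"
  by (simp add: transpose_def vec_eq_iff)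

lemma transpose_diff: "transpose (A - B) = transpose A - transpose (B::real^'n^'m)"
  by (simp add: transpose_def vec_eq_iff)

lemma matrix_diff_ldistrib: "(A::real^'n^'m) ** (B - C) = A ** B - A ** C"
  by (simp add: matrix_matrix_mult_def vec_eq_iff sum_subtractf algebra_simps)

lemma matrix_diff_rdistrib: "((B::real^'n^'m) - C) ** A = B ** A - C ** A"
  by (simp add: matrix_matrix_mult_def vec_eq_iff sum_subtractf algebra_simps)

lemma transpose_sum: "transpose (\<Sum>i\<in>S. F i) = (\<Sum>i\<in>S. transpose (F i :: real^'n^'m))"
  by (induction S rule: infinite_finite_induct)
    (simp_all add: transpose_add transpose_def vec_eq_iff)

lemma symmetric_inner_mulv: "transpose A = A \<Longrightarrow> u \<bullet> (A *v v) = (A *v u) \<bullet> (v::real^'n)"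
  by (metis dot_lmul_matrix transpose_matrix_vector)

lemma matrix_inv_eqI:
  fixes G :: "real^'n^'n"
  assumes "G ** X = mat 1"
  shows "matrix_inv G = X"
proof -
  have "X ** G = mat 1"
    using assms matrix_left_right_inverse by blast
  then have "G ** matrix_inv G = mat 1 \<and> matrix_inv G ** G = mat 1"
    unfolding matrix_inv_def using assms
    by (intro someI[of "\<lambda>A'. G ** A' = mat 1 \<and> A' ** G = mat 1" X]) blast
  then have "matrix_inv G = matrix_inv G ** (G ** X)"
    using assms by simp
  also have "\<dots> = X"
    using \<open>G ** matrix_inv G = mat 1 \<and> _\<close> by (simp add: matrix_mul_assoc)
  finally show ?thesis .
qed

subsection \<open>Orthonormal bases and matrices diagonal in them\<close>

definition orthonormal_basis :: "(real^'n) set \<Rightarrow> bool" where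
  "orthonormal_basis B \<longleftrightarrow>
     finite B \<and> pairwise orthogonal B \<and> (\<forall>b\<in>B. norm b = 1) \<and> span B = UNIV"

lemma orthonormal_basis_exists: "\<exists>B::(real^'n) set. orthonormal_basis B"
proof -
  obtain B :: "(real^'n) set" where "pairwise orthogonal B" "\<And>b. b \<in> B \<Longrightarrow> norm b = 1"
      "independent B" "span B = UNIV"
    using orthonormal_basis_subspace[OF subspace_UNIV] by metis
  then show ?thesis
    unfolding orthonormal_basis_def using finiteI_independent by blast
qed

context
  fixes B :: "(real^'n) set"
  assumes onb: "orthonormal_basis B"
begin

lemma onb_finite: "finite B"
  using onb unfolding orthonormal_basis_def by blast

lemma onb_inner: "b \<in> B \<Longrightarrow> c \<in> B \<Longrightarrow> b \<bullet> c = (if b = c then 1 else 0)"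
  using onb unfolding orthonormal_basis_def pairwise_def orthogonal_def
  by (auto simp: norm_eq_1)

lemma onb_nonzero: "b \<in> B \<Longrightarrow> b \<noteq> 0"
  using onb_inner by force

lemma onb_expand: "(\<Sum>b\<in>B. (v \<bullet> b) *\<^sub>R b) = v"
  using onb orthonormal_basis_expand[of B v] unfolding orthonormal_basis_def by blast

lemma onb_eq_0I:
  assumes "\<And>b. b \<in> B \<Longrightarrow> b \<bullet> v = 0"
  shows "v = 0"
proof -
  have "(\<Sum>b\<in>B. (v \<bullet> b) *\<^sub>R b) = 0"
    using assms by (intro sum.neutral) (simp add: inner_commute)
  then show ?thesis
    by (simp add: onb_expand)
qed

lemma onb_sum_delta:
  assumes "b \<in> B"
  shows "(\<Sum>c\<in>B. (b \<bullet> c) *\<^sub>R f c) = (f b :: 'a::real_vector)"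
proof -
  have "(\<Sum>c\<in>B. (b \<bullet> c) *\<^sub>R f c) = (\<Sum>c\<in>B. if c = b then f b else 0)"
    using assms by (intro sum.cong) (auto simp: onb_inner)
  then show ?thesis
    using assms onb_finite by simp
qed

lemma inner_onb_expand: "u \<bullet> v = (\<Sum>b\<in>B. (b \<bullet> u) * (b \<bullet> v))"
proof -
  have "u \<bullet> v = (\<Sum>b\<in>B. (u \<bullet> b) *\<^sub>R b) \<bullet> v"
    by (simp only: onb_expand)
  then show ?thesis
    by (simp add: inner_sum_left inner_sum_right inner_commute)
qed

lemma onb_matrix_eqI:
  assumes "\<And>b. b \<in> B \<Longrightarrow> X *v b = Y *v b"
  shows "X = Y"
proof -
  have "X *v v = Y *v v" for v
    using assms by (subst (1 2) onb_expand[of v, symmetric])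
      (simp add: matrix_vector_mult_sum matrix_vector_mult_scaleR)
  then show ?thesis
    by (simp add: matrix_eq)
qed

lemma trace_onb: "trace X = (\<Sum>b\<in>B. b \<bullet> (X *v b))"
proof -
  have "X = (\<Sum>b\<in>B. outer (X *v b) b)"
  proof (rule onb_matrix_eqI)
    fix c assume "c \<in> B"
    have "X *v c = X *v (\<Sum>b\<in>B. (c \<bullet> b) *\<^sub>R b)"
      by (simp only: onb_expand)
    then show "X *v c = (\<Sum>b\<in>B. outer (X *v b) b) *v c"
      by (simp add: sum_matrix_vector_mult outer_mulv matrix_vector_mult_sum
          matrix_vector_mult_scaleR inner_commute)
  qed
  then have "trace X = (\<Sum>b\<in>B. trace (outer (X *v b) b))"
    by (metis trace_sum)
  then show ?thesis
    by (simp add: trace_outer inner_commute)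
qed

end

definition diag_onb :: "(real^'n) set \<Rightarrow> (real^'n \<Rightarrow> real) \<Rightarrow> real^'n^'n" where
  "diag_onb B \<mu> = (\<Sum>b\<in>B. \<mu> b *\<^sub>R outer b b)"

lemma diag_onb_mulv: "diag_onb B \<mu> *v v = (\<Sum>b\<in>B. (\<mu> b * (b \<bullet> v)) *\<^sub>R b)"
  by (simp add: diag_onb_def sum_matrix_vector_mult scaleR_matrix_vector_assoc[symmetric]
      outer_mulv)

lemma inner_diag_onb: "v \<bullet> (diag_onb B \<mu> *v v) = (\<Sum>b\<in>B. \<mu> b * (b \<bullet> v)\<^sup>2)"
  by (simp add: diag_onb_mulv inner_sum_right power2_eq_square inner_commute mult_ac)

lemma transpose_diag_onb: "transpose (diag_onb B \<mu>) = diag_onb B \<mu>"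
  by (simp add: diag_onb_def transpose_sum transpose_scalar transpose_outer)

lemma diag_onb_cong: "(\<And>b. b \<in> B \<Longrightarrow> \<mu> b = \<nu> b) \<Longrightarrow> diag_onb B \<mu> = diag_onb B \<nu>"
  unfolding diag_onb_def by (rule sum.cong) auto

lemma diag_onb_add: "diag_onb B (\<lambda>b. \<mu> b + \<nu> b) = diag_onb B \<mu> + diag_onb B \<nu>"
  by (simp add: diag_onb_def scaleR_add_left sum.distrib)

lemma diag_onb_psd: "(\<And>b. b \<in> B \<Longrightarrow> 0 \<le> \<mu> b) \<Longrightarrow> diag_onb B \<mu> \<in> psd_set"
  by (simp add: psd_set_def inner_diag_onb transpose_diag_onb sum_nonneg)

context
  fixes B :: "(real^'n) set"
  assumes onb: "orthonormal_basis B"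
begin

lemma diag_onb_mulv_basis: "b \<in> B \<Longrightarrow> diag_onb B \<mu> *v b = \<mu> b *\<^sub>R b"
  using onb_sum_delta[OF onb, of b "\<lambda>c. \<mu> c *\<^sub>R c"]
  by (simp add: diag_onb_mulv inner_commute mult.commute)

lemma diag_onb_eqI: "(\<And>b. b \<in> B \<Longrightarrow> A *v b = \<mu> b *\<^sub>R b) \<Longrightarrow> A = diag_onb B \<mu>"
  by (rule onb_matrix_eqI[OF onb]) (simp add: diag_onb_mulv_basis)

lemma trace_diag_onb: "trace (diag_onb B \<mu>) = (\<Sum>b\<in>B. \<mu> b)"
  by (simp add: trace_onb[OF onb] diag_onb_mulv_basis onb_inner[OF onb])

lemma diag_onb_mult: "diag_onb B \<mu> ** diag_onb B \<nu> = diag_onb B (\<lambda>b. \<mu> b * \<nu> b)"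
  by (rule diag_onb_eqI)
    (simp add: matrix_vector_mul_assoc[symmetric] diag_onb_mulv_basis matrix_vector_mult_scaleR)

lemma diag_onb_const: "diag_onb B (\<lambda>_. c) = c *\<^sub>R mat 1"
  by (rule diag_onb_eqI[symmetric]) (simp add: scaleR_matrix_vector_assoc[symmetric])

lemma diag_onb_pd:
  assumes pos: "\<And>b. b \<in> B \<Longrightarrow> 0 < \<mu> b"
  shows "diag_onb B \<mu> \<in> pd_set"
proof -
  have "0 < v \<bullet> (diag_onb B \<mu> *v v)" if "v \<noteq> 0" for v
  proof -
    obtain b where b: "b \<in> B" "b \<bullet> v \<noteq> 0"
      using onb_eq_0I[OF onb] \<open>v \<noteq> 0\<close> by blast
    have "0 < \<mu> b * (b \<bullet> v)\<^sup>2"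
      using pos b by simp
    also have "\<dots> \<le> (\<Sum>c\<in>B. \<mu> c * (c \<bullet> v)\<^sup>2)"
      using b(1) pos onb_finite[OF onb]
      by (intro member_le_sum) (auto intro!: mult_nonneg_nonneg intro: less_imp_le)
    finally show ?thesis
      by (simp add: inner_diag_onb)
  qed
  then show ?thesis
    unfolding pd_set_def by (simp add: transpose_diag_onb)
qed

lemma diag_onb_eigenvalue: "b \<in> B \<Longrightarrow> b \<bullet> (diag_onb B \<mu> *v b) = \<mu> b"
  by (simp add: diag_onb_mulv_basis onb_inner[OF onb])

lemma psd_diag_onb_nonneg: "diag_onb B \<mu> \<in> psd_set \<Longrightarrow> b \<in> B \<Longrightarrow> 0 \<le> \<mu> b"
  by (simp add: psd_set_def flip: diag_onb_eigenvalue)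

lemma pd_diag_onb_pos: "diag_onb B \<mu> \<in> pd_set \<Longrightarrow> b \<in> B \<Longrightarrow> 0 < \<mu> b"
  by (simp add: pd_set_def onb_nonzero[OF onb] flip: diag_onb_eigenvalue)

end

subsection \<open>The spectral theorem\<close>

lemma nonpos_if_le_all_pos_mult:
  fixes a c :: real
  assumes "\<And>t. 0 < t \<Longrightarrow> a \<le> t * c"
  shows "a \<le> 0"
proof (rule tendsto_lowerbound)
  show "((\<lambda>t. t * c) \<longlongrightarrow> 0) (at_right 0)"
    by (auto intro!: tendsto_eq_intros)
  show "\<forall>\<^sub>F t in at_right 0. a \<le> t * c"
    using assms eventually_at_right_less[of 0] by (auto elim: eventually_mono)
qed simp

lemma rayleigh_max_exists:
  fixes A :: "real^'n^'n"
  assumes "subspace V" "V \<noteq> {0}"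
  obtains u where "u \<in> V" "u \<bullet> u = 1" "\<And>v. v \<in> V \<Longrightarrow> v \<bullet> (A *v v) \<le> (u \<bullet> (A *v u)) * (v \<bullet> v)"
proof -
  define S where "S = V \<inter> sphere 0 1"
  obtain v0 where "v0 \<in> V" "v0 \<noteq> 0"
    using assms subspace_0 by blast
  then have "v0 /\<^sub>R norm v0 \<in> S"
    using assms(1) by (simp add: S_def subspace_scale)
  moreover have "compact S"
    unfolding S_def using assms(1) by (intro closed_Int_compact closed_subspace compact_sphere)
  moreover have "continuous_on S (\<lambda>v. v \<bullet> (A *v v))"
    by (intro continuous_on_inner continuous_on_id matrix_vector_mult_linear_continuous_on)
  ultimately obtain u where u: "u \<in> S" and max: "\<And>w. w \<in> S \<Longrightarrow> w \<bullet> (A *v w) \<le> u \<bullet> (A *v u)"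
    using continuous_attains_sup[of S "\<lambda>v. v \<bullet> (A *v v)"] by blast
  have "v \<bullet> (A *v v) \<le> (u \<bullet> (A *v u)) * (v \<bullet> v)" if "v \<in> V" for v
  proof (cases "v = 0")
    case False
    then have "v /\<^sub>R norm v \<in> S"
      using assms(1) that by (simp add: S_def subspace_scale)
    moreover have "(v /\<^sub>R norm v) \<bullet> (A *v (v /\<^sub>R norm v)) = (v \<bullet> (A *v v)) / (norm v)\<^sup>2"
      by (simp add: matrix_vector_mult_scaleR power2_eq_square divide_inverse)
    ultimately have "(v \<bullet> (A *v v)) / (norm v)\<^sup>2 \<le> u \<bullet> (A *v u)"
      using max by metis
    then show ?thesis
      using False by (simp add: divide_le_eq power2_norm_eq_inner)
  qed simp
  moreover have "u \<in> V" "u \<bullet> u = 1"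
    using u by (auto simp: S_def norm_eq_1)
  ultimately show ?thesis
    using that by blast
qed

lemma rayleigh_max_eigenvector:
  fixes A :: "real^'n^'n"
  assumes sym: "transpose A = A" and V: "subspace V" "\<forall>v\<in>V. A *v v \<in> V"
    and u: "u \<in> V" "u \<bullet> u = 1"
    and max: "\<And>v. v \<in> V \<Longrightarrow> v \<bullet> (A *v v) \<le> (u \<bullet> (A *v u)) * (v \<bullet> v)"
  shows "A *v u = (u \<bullet> (A *v u)) *\<^sub>R u"
proof -
  define \<mu> where "\<mu> = u \<bullet> (A *v u)"
  define z where "z = A *v u - \<mu> *\<^sub>R u"
  have "z \<in> V"
    using V u by (simp add: z_def subspace_diff subspace_scale)
  have uz: "u \<bullet> z = 0"
    using u by (simp add: z_def \<mu>_def inner_diff_right)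
  have zAu: "z \<bullet> (A *v u) = z \<bullet> z"
    using uz by (simp add: z_def inner_diff_right inner_diff_left inner_commute)
  have "2 * (z \<bullet> z) \<le> t * (\<mu> * (z \<bullet> z) - z \<bullet> (A *v z))" if "0 < t" for t
  proof -
    have "u + t *\<^sub>R z \<in> V"
      using V u \<open>z \<in> V\<close> by (simp add: subspace_add subspace_scale)
    have "u \<bullet> (A *v z) = z \<bullet> (A *v u)"
      using symmetric_inner_mulv[OF sym, of u z] by (simp add: inner_commute)
    then have "(u + t *\<^sub>R z) \<bullet> (A *v (u + t *\<^sub>R z))
        = \<mu> + 2 * t * (z \<bullet> z) + t\<^sup>2 * (z \<bullet> (A *v z))"
      by (simp add: \<mu>_def zAu matrix_vector_right_distrib matrix_vector_mult_scaleR
          inner_add_left inner_add_right power2_eq_square distrib_left)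
    moreover have "(u + t *\<^sub>R z) \<bullet> (u + t *\<^sub>R z) = 1 + t\<^sup>2 * (z \<bullet> z)"
      using u uz by (simp add: inner_add_left inner_add_right inner_commute power2_eq_square)
    ultimately have "\<mu> + 2 * t * (z \<bullet> z) + t\<^sup>2 * (z \<bullet> (A *v z)) \<le> \<mu> * (1 + t\<^sup>2 * (z \<bullet> z))"
      using max[OF \<open>u + t *\<^sub>R z \<in> V\<close>] by (simp add: \<mu>_def)
    then have "t * (2 * (z \<bullet> z)) \<le> t * (t * (\<mu> * (z \<bullet> z) - z \<bullet> (A *v z)))"
      by (simp add: power2_eq_square algebra_simps)
    then show ?thesis
      using \<open>0 < t\<close> by simp
  qed
  then have "2 * (z \<bullet> z) \<le> 0"
    by (rule nonpos_if_le_all_pos_mult)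
  then have "z = 0"
    using inner_ge_zero[of z] by simp
  then show ?thesis
    by (simp add: z_def \<mu>_def)
qed

lemma subspace_orthogonal_split:
  fixes V :: "'a::euclidean_space set"
  assumes V: "subspace V" and u: "u \<in> V" "u \<bullet> u = 1"
  defines "W \<equiv> V \<inter> {w. orthogonal u w}"
  shows "subspace W" and "dim W < dim V" and "span B = W \<Longrightarrow> span (insert u B) = V"
proof -
  show W: "subspace W"
    unfolding W_def by (intro subspace_inter V subspace_orthogonal_to_vector)
  have "u \<notin> W"
    using u by (simp add: W_def orthogonal_def)
  moreover have "W \<subseteq> V"
    by (simp add: W_def)
  ultimately have "span W \<subset> span V"
    using u(1) W V by (metis psubsetI span_eq_iff)
  then show "dim W < dim V"
    by (intro dim_psubset)
  assume B: "span B = W"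
  show "span (insert u B) = V"
  proof
    have "B \<subseteq> V"
      using span_superset[of B] B \<open>W \<subseteq> V\<close> by simp
    then show "span (insert u B) \<subseteq> V"
      using u(1) V by (intro span_minimal) simp_all
    show "V \<subseteq> span (insert u B)"
    proof
      fix v assume "v \<in> V"
      then have "v - (u \<bullet> v) *\<^sub>R u \<in> W"
        using u V by (simp add: W_def orthogonal_def subspace_diff subspace_scale inner_diff_right)
      then have "v - (u \<bullet> v) *\<^sub>R u \<in> span (insert u B)"
        using B span_mono[of B "insert u B"] by blast
      then show "v \<in> span (insert u B)"
        by (metis diff_add_cancel span_add span_base span_mul insertI1)
    qed
  qed
qed

lemma invariant_subspace_eigenbasis:
  fixes A :: "real^'n^'n"
  assumes sym: "transpose A = A"
  shows "subspace V \<Longrightarrow> \<forall>v\<in>V. A *v v \<in> V \<Longrightarrow>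
    \<exists>B. finite B \<and> B \<subseteq> V \<and> pairwise orthogonal B \<and> (\<forall>b\<in>B. norm b = 1) \<and> span B = V
      \<and> (\<forall>b\<in>B. \<exists>\<mu>. A *v b = \<mu> *\<^sub>R b)"
proof (induction "dim V" arbitrary: V rule: less_induct)
  case less
  show ?case
  proof (cases "V = {0}")
    case True
    then show ?thesis
      by (intro exI[of _ "{}"]) auto
  next
    case False
    obtain u where u: "u \<in> V" "u \<bullet> u = 1"
      and max: "\<And>v. v \<in> V \<Longrightarrow> v \<bullet> (A *v v) \<le> (u \<bullet> (A *v u)) * (v \<bullet> v)"
      using rayleigh_max_exists[OF less.prems(1) False] by blast
    obtain \<mu> where eig: "A *v u = \<mu> *\<^sub>R u"
      using rayleigh_max_eigenvector[OF sym less.prems u max] by blast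
    define W where "W = V \<inter> {w. orthogonal u w}"
    note split = subspace_orthogonal_split[OF less.prems(1) u, folded W_def]
    have "A *v w \<in> W" if "w \<in> W" for w
    proof -
      have "u \<bullet> (A *v w) = (A *v u) \<bullet> w"
        by (rule symmetric_inner_mulv[OF sym])
      then show ?thesis
        using that less.prems(2) eig by (auto simp: W_def orthogonal_def)
    qed
    then obtain B where B: "finite B" "B \<subseteq> W" "pairwise orthogonal B" "\<forall>b\<in>B. norm b = 1"
      "span B = W" "\<forall>b\<in>B. \<exists>\<mu>. A *v b = \<mu> *\<^sub>R b"
      using less.hyps[OF split(2,1)] by blast
    have "pairwise orthogonal (insert u B)"
      using B(2,3) by (auto simp: pairwise_insert W_def orthogonal_commute)
    then show ?thesis
      using B u eig split(3)[OF B(5)] by (intro exI[of _ "insert u B"]) (auto simp: W_def norm_eq_1)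
  qed
qed

theorem symmetric_eq_diag_onb:
  fixes A :: "real^'n^'n"
  assumes "transpose A = A"
  obtains B \<mu> where "orthonormal_basis B" "A = diag_onb B \<mu>"
proof -
  obtain B where B: "finite B" "pairwise orthogonal B" "\<forall>b\<in>B. norm b = 1" "span B = UNIV"
      "\<forall>b\<in>B. \<exists>\<mu>. A *v b = \<mu> *\<^sub>R b"
    using invariant_subspace_eigenbasis[OF assms subspace_UNIV] by auto
  then have onb: "orthonormal_basis B"
    unfolding orthonormal_basis_def by blast
  define \<mu> where "\<mu> b = (SOME m. A *v b = m *\<^sub>R b)" for b
  have "A *v b = \<mu> b *\<^sub>R b" if "b \<in> B" for b
    using B(5) that unfolding \<mu>_def by (metis (mono_tags) someI_ex)
  then show ?thesis
    using that onb diag_onb_eqI[OF onb] by blast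
qed

subsection \<open>Functional calculus in a unital matrix algebra\<close>

locale matrix_algebra =
  fixes K :: "(real^'n^'n) set"
  assumes scaleR_closed: "A \<in> K \<Longrightarrow> c *\<^sub>R A \<in> K"
    and add_closed: "A \<in> K \<Longrightarrow> B \<in> K \<Longrightarrow> A + B \<in> K"
    and mult_closed: "A \<in> K \<Longrightarrow> B \<in> K \<Longrightarrow> A ** B \<in> K"
    and one_closed: "mat 1 \<in> K"
begin

lemma zero_closed: "0 \<in> K"
  using scaleR_closed[OF one_closed, of 0] by simp

lemma diff_closed: "A \<in> K \<Longrightarrow> B \<in> K \<Longrightarrow> A - B \<in> K"
  using add_closed[of A "(-1) *\<^sub>R B"] scaleR_closed[of B "-1"] by simp

lemma is_subspace: "subspace K"
  unfolding subspace_def using zero_closed add_closed scaleR_closed by blast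

lemma self_adjoint_part: "matrix_algebra {X \<in> K. transpose X \<in> K}"
  by unfold_locales
    (auto simp: scaleR_closed add_closed mult_closed one_closed transpose_scalar transpose_add
      matrix_transpose_mul)

text \<open>Newton interpolation of \<open>f\<close> on the eigenvalues in \<open>S\<close>: \<open>P0\<close> interpolates the divided
  differences of \<open>f\<close> at \<open>\<nu>\<close>.\<close>
lemma interpolation_exists:
  assumes A: "A \<in> K" "\<And>b. b \<in> B \<Longrightarrow> A *v b = \<mu> b *\<^sub>R b" and "finite S"
  shows "\<exists>P\<in>K. \<forall>b\<in>B. \<mu> b \<in> S \<longrightarrow> P *v b = f (\<mu> b) *\<^sub>R b"
  using \<open>finite S\<close>
proof (induction S arbitrary: f rule: finite_induct)
  case empty
  show ?case
    using one_closed by blast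
next
  case (insert \<nu> S)
  obtain P0 where "P0 \<in> K"
    and P0: "\<And>b. b \<in> B \<Longrightarrow> \<mu> b \<in> S \<Longrightarrow> P0 *v b = ((f (\<mu> b) - f \<nu>) / (\<mu> b - \<nu>)) *\<^sub>R b"
    using insert.IH[of "\<lambda>s. (f s - f \<nu>) / (s - \<nu>)"] by blast
  define P where "P = f \<nu> *\<^sub>R mat 1 + P0 ** (A - \<nu> *\<^sub>R mat 1)"
  have "P \<in> K"
    unfolding P_def using \<open>P0 \<in> K\<close> A(1)
    by (intro add_closed diff_closed scaleR_closed mult_closed one_closed)
  moreover have "P *v b = f (\<mu> b) *\<^sub>R b" if "b \<in> B" "\<mu> b \<in> insert \<nu> S" for b
  proof -
    have "(A - \<nu> *\<^sub>R mat 1) *v b = (\<mu> b - \<nu>) *\<^sub>R b"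
      using A(2)[OF \<open>b \<in> B\<close>]
      by (simp add: matrix_vector_mult_diff_rdistrib scaleR_matrix_vector_assoc[symmetric]
          scaleR_diff_left)
    then have "P *v b = f \<nu> *\<^sub>R b + (\<mu> b - \<nu>) *\<^sub>R (P0 *v b)"
      by (simp add: P_def matrix_vector_mult_add_rdistrib scaleR_matrix_vector_assoc[symmetric]
          matrix_vector_mul_assoc[symmetric] matrix_vector_mult_scaleR)
    moreover have "(\<mu> b - \<nu>) *\<^sub>R (P0 *v b) = (f (\<mu> b) - f \<nu>) *\<^sub>R b" if "\<mu> b \<in> S"
      using P0[OF \<open>b \<in> B\<close> that] that insert.hyps(2) by auto
    ultimately show ?thesis
      using that(2) by (cases "\<mu> b = \<nu>") (auto simp: scaleR_diff_left)
  qed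
  ultimately show ?case
    by blast
qed

lemma diag_onb_fun_closed:
  assumes B: "orthonormal_basis B" and A: "diag_onb B \<mu> \<in> K"
  shows "diag_onb B (\<lambda>b. f (\<mu> b)) \<in> K"
proof -
  have "finite (\<mu> ` B)"
    using onb_finite[OF B] by simp
  then obtain P where "P \<in> K" and P: "\<forall>b\<in>B. \<mu> b \<in> \<mu> ` B \<longrightarrow> P *v b = f (\<mu> b) *\<^sub>R b"
    using interpolation_exists[where f = f, OF A diag_onb_mulv_basis[OF B]] by blast
  have "P = diag_onb B (\<lambda>b. f (\<mu> b))"
    using P by (intro diag_onb_eqI[OF B]) simp
  with \<open>P \<in> K\<close> show ?thesis
    by simp
qed

lemma pd_inverse_closed:
  assumes "G \<in> K" "G \<in> pd_set"
  shows "matrix_inv G \<in> K \<inter> pd_set" "G ** matrix_inv G = mat 1" "matrix_inv G ** G = mat 1"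
proof -
  obtain B \<mu> where B: "orthonormal_basis B" and G: "G = diag_onb B \<mu>"
    using symmetric_eq_diag_onb assms(2) unfolding pd_set_def by blast
  have pos: "0 < \<mu> b" if "b \<in> B" for b
    using pd_diag_onb_pos[OF B, of \<mu> b] assms(2) that by (simp add: G)
  have "G ** diag_onb B (\<lambda>b. 1 / \<mu> b) = diag_onb B (\<lambda>_. 1)"
    unfolding G diag_onb_mult[OF B]
    by (intro diag_onb_cong) (simp add: pos less_imp_neq[OF pos, symmetric])
  then have "G ** diag_onb B (\<lambda>b. 1 / \<mu> b) = mat 1"
    by (simp add: diag_onb_const[OF B])
  then have inv: "matrix_inv G = diag_onb B (\<lambda>b. 1 / \<mu> b)"
    by (rule matrix_inv_eqI)
  have "diag_onb B (\<lambda>b. 1 / \<mu> b) \<in> K"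
    using diag_onb_fun_closed[OF B, of \<mu> "\<lambda>s. 1 / s"] assms(1) G by simp
  moreover have "diag_onb B (\<lambda>b. 1 / \<mu> b) \<in> pd_set"
    using pos by (intro diag_onb_pd[OF B]) simp
  ultimately show "matrix_inv G \<in> K \<inter> pd_set"
    by (simp add: inv)
  show "G ** matrix_inv G = mat 1"
    by (simp add: inv \<open>G ** _ = mat 1\<close>)
  then show "matrix_inv G ** G = mat 1"
    using matrix_left_right_inverse by blast
qed

end

lemma frob_inner_eq_inner: "frob_inner A B = A \<bullet> (B::real^'n^'n)"
  unfolding frob_inner_def trace_def matrix_matrix_mult_def transpose_def inner_vec_def
    inner_real_def
  by simp (rule sum.swap)

lemma symmetric_inner_eq_trace: "transpose A = A \<Longrightarrow> A \<bullet> C = trace (A ** C)"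
  by (metis frob_inner_def frob_inner_eq_inner)

lemma pd_subset_psd: "pd_set \<subseteq> psd_set"
proof
  fix A :: "real^'n^'n" assume A: "A \<in> pd_set"
  then have "0 \<le> v \<bullet> (A *v v)" for v
    by (cases "v = 0") (auto simp: pd_set_def intro: less_imp_le)
  then show "A \<in> psd_set"
    using A by (simp add: pd_set_def psd_set_def)
qed

lemma trace_completed_square:
  fixes G Gi H :: "real^'n^'n"
  assumes "G ** Gi = mat 1" "Gi ** G = mat 1"
  shows "trace (H ** H ** Gi) + trace G - 2 * trace H = trace ((H - G) ** Gi ** (H - G))"
proof -
  have expand: "(H - G) ** Gi ** (H - G) = H ** Gi ** H - H - H + G"
    using assms
    by (simp add: matrix_diff_ldistrib matrix_diff_rdistrib matrix_mul_assoc[symmetric])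
  have "trace (H ** Gi ** H) = trace (H ** H ** Gi)"
    by (metis matrix_mul_assoc trace_mul_sym)
  then show ?thesis
    by (simp only: expand trace_add trace_sub)
qed

lemma trace_sandwich_pd:
  fixes D Gi :: "real^'n^'n"
  assumes Gi: "Gi \<in> pd_set" and D: "transpose D = D"
  shows "0 \<le> trace (D ** Gi ** D)" and "trace (D ** Gi ** D) = 0 \<Longrightarrow> D = 0"
proof -
  obtain B :: "(real^'n) set" where B: "orthonormal_basis B"
    using orthonormal_basis_exists by blast
  define q where "q b = (D *v b) \<bullet> (Gi *v (D *v b))" for b
  have q_pos: "0 < q b" if "D *v b \<noteq> 0" for b
    using Gi that by (simp add: q_def pd_set_def)
  have q_nonneg: "0 \<le> q b" for b
    using q_pos[of b] by (cases "D *v b = 0") (auto simp: q_def)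
  have tr: "trace (D ** Gi ** D) = sum q B"
    unfolding trace_onb[OF B] q_def
    by (simp add: symmetric_inner_mulv[OF D] matrix_vector_mul_assoc[symmetric] matrix_mul_assoc)
  show "0 \<le> trace (D ** Gi ** D)"
    unfolding tr by (simp add: sum_nonneg q_nonneg)
  assume "trace (D ** Gi ** D) = 0"
  then have "\<forall>b\<in>B. q b = 0"
    by (simp add: tr sum_nonneg_eq_0_iff[OF onb_finite[OF B]] q_nonneg)
  then have "\<And>b. b \<in> B \<Longrightarrow> D *v b = 0 *v b"
    using q_pos by fastforce
  then show "D = 0"
    by (rule onb_matrix_eqI[OF B])
qed

lemma P_pd_eqI:
  assumes "H \<in> \<H> \<inter> pd_set"
    and "\<And>G. G \<in> \<H> \<inter> pd_set \<Longrightarrow> G \<noteq> H \<Longrightarrow> precond_obj M H < precond_obj M G"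
  shows "P_pd \<H> M = H"
  unfolding P_pd_def
proof (rule the_equality)
  show "H \<in> \<H> \<inter> pd_set \<and> (\<forall>G\<in>\<H> \<inter> pd_set. precond_obj M H \<le> precond_obj M G)"
    using assms by (metis order.order_iff_strict)
  show "G = H" if "G \<in> \<H> \<inter> pd_set \<and> (\<forall>G'\<in>\<H> \<inter> pd_set. precond_obj M G \<le> precond_obj M G')" for G
    using that assms by (meson not_le)
qed

lemma psd_quad_le_trace:
  assumes "G \<in> psd_set"
  shows "y \<bullet> (G *v y) \<le> trace G * (y \<bullet> y)"
proof -
  obtain B \<mu> where B: "orthonormal_basis B" and G: "G = diag_onb B \<mu>"
    using symmetric_eq_diag_onb assms unfolding psd_set_def by blast
  have "(b \<bullet> y)\<^sup>2 \<le> y \<bullet> y" if "b \<in> B" for b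
  proof -
    have "\<bar>b \<bullet> y\<bar> \<le> norm y"
      using Cauchy_Schwarz_ineq2[of b y] B that by (simp add: orthonormal_basis_def)
    then have "(b \<bullet> y)\<^sup>2 \<le> (norm y)\<^sup>2"
      by (metis abs_le_square_iff abs_norm_cancel)
    then show ?thesis
      by (simp add: power2_norm_eq_inner)
  qed
  then have "y \<bullet> (G *v y) \<le> (\<Sum>b\<in>B. \<mu> b * (y \<bullet> y))"
    unfolding G inner_diag_onb
    using psd_diag_onb_nonneg[OF B] assms G by (intro sum_mono mult_left_mono) auto
  then show ?thesis
    by (simp add: G trace_diag_onb[OF B] sum_distrib_right)
qed

lemma H_norm_ge:
  assumes psd: "\<H> \<subseteq> psd_set" and "G \<in> \<H>" "trace G \<le> 1"
  shows "sqrt (y \<bullet> (G *v y)) \<le> H_norm \<H> y"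
  unfolding H_norm_def
proof (rule cSup_upper)
  show "bdd_above {sqrt (y \<bullet> (H *v y)) | H. H \<in> \<H> \<and> trace H \<le> 1}"
  proof (rule bdd_aboveI)
    fix z assume "z \<in> {sqrt (y \<bullet> (H *v y)) | H. H \<in> \<H> \<and> trace H \<le> 1}"
    then obtain H where H: "H \<in> \<H>" "trace H \<le> 1" "z = sqrt (y \<bullet> (H *v y))"
      by blast
    have "y \<bullet> (H *v y) \<le> y \<bullet> y"
      using psd_quad_le_trace[of H y] H psd mult_right_mono[OF H(2), of "y \<bullet> y"] by auto
    then show "z \<le> sqrt (y \<bullet> y)"
      by (simp add: H(3))
  qed
qed (use assms(2,3) in blast)

lemma H_norm_le_1I:
  assumes "0 \<in> \<H>" "\<And>G. G \<in> \<H> \<Longrightarrow> trace G \<le> 1 \<Longrightarrow> y \<bullet> (G *v y) \<le> 1"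
  shows "H_norm \<H> y \<le> 1"
  unfolding H_norm_def
proof (rule cSup_least)
  have "trace (0::real^'n^'n) \<le> 1"
    by (simp add: trace_def)
  then have "sqrt (y \<bullet> (0 *v y)) \<in> {sqrt (y \<bullet> (H *v y)) | H. H \<in> \<H> \<and> trace H \<le> 1}"
    using assms(1) by (intro CollectI exI[of _ 0]) simp
  then show "{sqrt (y \<bullet> (H *v y)) | H. H \<in> \<H> \<and> trace H \<le> 1} \<noteq> {}"
    by (metis empty_iff)
qed (use assms(2) in fastforce)

subsection \<open>The projection of \<open>x x\<^sup>T\<close> onto the algebra\<close>

lemma inner_transpose: "transpose A \<bullet> transpose B = A \<bullet> (B::real^'n^'m)"
  unfolding transpose_def inner_vec_def inner_real_def by simp (rule sum.swap)

lemma symmetric_representer_exists: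
  fixes K :: "(real^'n^'n) set"
  assumes K: "subspace K" "\<And>X. X \<in> K \<Longrightarrow> transpose X \<in> K" and M: "transpose M = M"
  obtains A where "A \<in> K" "transpose A = A" "\<And>C. C \<in> K \<Longrightarrow> A \<bullet> C = M \<bullet> C"
proof -
  obtain A0 z where A0: "A0 \<in> span K" and z: "\<And>w. w \<in> span K \<Longrightarrow> orthogonal z w"
    and M_eq: "M = A0 + z"
    using orthogonal_subspace_decomp_exists by blast
  have "A0 \<in> K"
    using A0 K(1) by (metis span_eq_iff)
  have A0_rep: "A0 \<bullet> C = M \<bullet> C" if "C \<in> K" for C
    using z[OF span_base[OF that]] by (simp add: M_eq inner_add_left orthogonal_def)
  define A where "A = (1/2) *\<^sub>R (A0 + transpose A0)"
  have "A \<in> K"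
    using \<open>A0 \<in> K\<close> K by (simp add: A_def subspace_add subspace_scale)
  moreover have "transpose A = A"
    by (simp add: A_def transpose_scalar transpose_add add.commute)
  moreover have "A \<bullet> C = M \<bullet> C" if "C \<in> K" for C
  proof -
    have "transpose A0 \<bullet> C = A0 \<bullet> transpose C"
      using inner_transpose[of A0 "transpose C"] by simp
    also have "\<dots> = M \<bullet> C"
      using A0_rep[OF K(2)[OF that]] inner_transpose[of M C] M by simp
    finally show ?thesis
      using A0_rep[OF that] by (simp add: A_def inner_add_left)
  qed
  ultimately show ?thesis
    using that by blast
qed

definition pinv_sqrt :: "real \<Rightarrow> real" where
  "pinv_sqrt s = (if 0 < s then 1 / sqrt s else 0)"

lemma pinv_sqrt_nonneg: "0 \<le> pinv_sqrt s"
  by (simp add: pinv_sqrt_def)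

lemma mult_pinv_sqrt: "0 \<le> s \<Longrightarrow> s * pinv_sqrt s = sqrt s"
  by (auto simp: pinv_sqrt_def real_div_sqrt)

lemma pinv_sqrt_sandwich: "0 \<le> s \<Longrightarrow> pinv_sqrt s * s * pinv_sqrt s = (if 0 < s then 1 else 0)"
  by (auto simp: pinv_sqrt_def divide_simps)

text \<open>\<open>diag_onb B \<mu>\<close> is the orthogonal projection of \<open>x x\<^sup>T\<close> onto \<open>K\<close>, in spectral form;
  both sides of the theorem are functions of its eigenvalues \<open>\<mu>\<close>.\<close>
locale outer_representer = matrix_algebra K for K :: "(real^'n^'n) set" +
  fixes x :: "real^'n" and B :: "(real^'n) set" and \<mu> :: "real^'n \<Rightarrow> real"
  assumes onb: "orthonormal_basis B"
    and representer_closed: "diag_onb B \<mu> \<in> K"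
    and representer: "\<And>C. C \<in> K \<Longrightarrow> diag_onb B \<mu> \<bullet> C = x \<bullet> (C *v x)"
begin

lemma representer_fun_closed: "diag_onb B (\<lambda>b. f (\<mu> b)) \<in> K"
  by (rule diag_onb_fun_closed[OF onb representer_closed])

lemma sum_eigenvalue_mult: "(\<Sum>b\<in>B. \<mu> b * f (\<mu> b)) = (\<Sum>b\<in>B. f (\<mu> b) * (b \<bullet> x)\<^sup>2)"
proof -
  have "diag_onb B \<mu> \<bullet> diag_onb B (\<lambda>b. f (\<mu> b)) = trace (diag_onb B (\<lambda>b. \<mu> b * f (\<mu> b)))"
    by (simp add: symmetric_inner_eq_trace transpose_diag_onb diag_onb_mult[OF onb])
  moreover have "diag_onb B \<mu> \<bullet> diag_onb B (\<lambda>b. f (\<mu> b)) = x \<bullet> (diag_onb B (\<lambda>b. f (\<mu> b)) *v x)"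
    by (rule representer[OF representer_fun_closed])
  ultimately show ?thesis
    by (simp add: trace_diag_onb[OF onb] inner_diag_onb)
qed

lemma eigenspace_weight:
  "\<mu> b * card {c \<in> B. \<mu> c = \<mu> b} = (\<Sum>c\<in>{c \<in> B. \<mu> c = \<mu> b}. (c \<bullet> x)\<^sup>2)"
proof -
  let ?E = "{c \<in> B. \<mu> c = \<mu> b}" and ?\<chi> = "\<lambda>s. if s = \<mu> b then 1 else 0 :: real"
  have fin: "finite B"
    by (rule onb_finite[OF onb])
  have "\<mu> b * card ?E = (\<Sum>c\<in>?E. \<mu> b)"
    by simp
  also have "\<dots> = (\<Sum>c\<in>B. \<mu> c * ?\<chi> (\<mu> c))"
    by (subst sum.inter_filter[OF fin]) (auto intro: sum.cong)
  also have "\<dots> = (\<Sum>c\<in>B. ?\<chi> (\<mu> c) * (c \<bullet> x)\<^sup>2)"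
    by (rule sum_eigenvalue_mult)
  also have "\<dots> = (\<Sum>c\<in>?E. (c \<bullet> x)\<^sup>2)"
    by (subst sum.inter_filter[OF fin]) (auto intro: sum.cong)
  finally show ?thesis .
qed

lemma eigenvalue_nonneg:
  assumes "b \<in> B"
  shows "0 \<le> \<mu> b"
proof -
  have "0 \<le> \<mu> b * card {c \<in> B. \<mu> c = \<mu> b}"
    by (simp add: eigenspace_weight sum_nonneg)
  moreover have "0 < card {c \<in> B. \<mu> c = \<mu> b}"
    using assms onb_finite[OF onb] by (auto simp: card_gt_0_iff)
  ultimately show ?thesis
    by (simp add: zero_le_mult_iff)
qed

lemma null_eigenvector_orthogonal:
  assumes "b \<in> B" "\<mu> b = 0"
  shows "b \<bullet> x = 0"
proof -
  have "(\<Sum>c\<in>{c \<in> B. \<mu> c = \<mu> b}. (c \<bullet> x)\<^sup>2) = 0"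
    using eigenspace_weight[of b] assms(2) by simp
  then show ?thesis
    using assms(1) onb_finite[OF onb] by (simp add: sum_nonneg_eq_0_iff)
qed

lemma eigenvalue_pos_if_pd:
  assumes "outer x x \<in> pd_set" "b \<in> B"
  shows "0 < \<mu> b"
proof (rule ccontr)
  assume "\<not> 0 < \<mu> b"
  then have "b \<bullet> x = 0"
    using eigenvalue_nonneg[OF assms(2)] null_eigenvector_orthogonal[OF assms(2)] by simp
  then have "b \<bullet> (outer x x *v b) = 0"
    by (simp add: outer_mulv inner_commute)
  moreover have "0 < b \<bullet> (outer x x *v b)"
    using assms(1) onb_nonzero[OF onb assms(2)] by (simp add: pd_set_def)
  ultimately show False
    by simp
qed

lemma precond_obj_shifted_outer:
  assumes "G \<in> K" "G \<in> pd_set"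
  shows "precond_obj (outer x x + d *\<^sub>R mat 1) G
    = trace ((diag_onb B \<mu> + d *\<^sub>R mat 1) ** matrix_inv G) + trace G"
proof -
  have "matrix_inv G \<in> K"
    using pd_inverse_closed[OF assms] by blast
  then have "frob_inner (outer x x + d *\<^sub>R mat 1) (matrix_inv G)
      = (diag_onb B \<mu> + d *\<^sub>R mat 1) \<bullet> matrix_inv G"
    by (simp add: frob_inner_eq_inner inner_add_left inner_outer_self representer)
  also have "\<dots> = trace ((diag_onb B \<mu> + d *\<^sub>R mat 1) ** matrix_inv G)"
    by (simp add: symmetric_inner_eq_trace transpose_diag_onb transpose_add transpose_scalar)
  finally show ?thesis
    by (simp add: precond_obj_def)
qed

lemma P_pd_shifted_outer:
  assumes pos: "\<And>b. b \<in> B \<Longrightarrow> 0 < \<mu> b + d"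
  shows "P_pd (psd_set \<inter> K) (outer x x + d *\<^sub>R mat 1) = diag_onb B (\<lambda>b. sqrt (\<mu> b + d))"
    (is "P_pd _ ?M = ?H")
proof (rule P_pd_eqI)
  have "?H \<in> K"
    using representer_fun_closed[of "\<lambda>s. sqrt (s + d)"] .
  moreover have "?H \<in> pd_set"
    using pos by (intro diag_onb_pd[OF onb]) simp
  ultimately show H: "?H \<in> psd_set \<inter> K \<inter> pd_set"
    using pd_subset_psd by blast
  have "?H ** ?H = diag_onb B (\<lambda>b. \<mu> b + d)"
    unfolding diag_onb_mult[OF onb] using pos by (intro diag_onb_cong) (simp add: less_imp_le)
  then have HH: "?H ** ?H = diag_onb B \<mu> + d *\<^sub>R mat 1"
    by (simp add: diag_onb_add diag_onb_const[OF onb])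
  have obj: "precond_obj ?M G = trace (?H ** ?H ** matrix_inv G) + trace G"
    if "G \<in> K" "G \<in> pd_set" for G
    using precond_obj_shifted_outer[OF that] by (simp add: HH)
  have "?H ** ?H ** matrix_inv ?H = ?H"
    using pd_inverse_closed H by (simp add: matrix_mul_assoc[symmetric])
  then have obj_H: "precond_obj ?M ?H = 2 * trace ?H"
    using obj H by simp
  fix G assume G: "G \<in> psd_set \<inter> K \<inter> pd_set" "G \<noteq> ?H"
  have "precond_obj ?M G - precond_obj ?M ?H = trace ((?H - G) ** matrix_inv G ** (?H - G))"
    using trace_completed_square[of G "matrix_inv G" ?H] pd_inverse_closed obj G obj_H by simp
  moreover have "transpose (?H - G) = ?H - G"
    using G by (simp add: transpose_diff transpose_diag_onb pd_set_def)
  then have "0 < trace ((?H - G) ** matrix_inv G ** (?H - G))"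
    using trace_sandwich_pd[of "matrix_inv G" "?H - G"] pd_inverse_closed G by fastforce
  ultimately show "precond_obj ?M ?H < precond_obj ?M G"
    by simp
qed

lemma P_H_outer: "P_H (psd_set \<inter> K) (outer x x) = diag_onb B (\<lambda>b. sqrt (\<mu> b))"
proof (cases "outer x x \<in> pd_set")
  case True
  then show ?thesis
    using P_pd_shifted_outer[of 0] eigenvalue_pos_if_pd by (simp add: P_H_def)
next
  case False
  have "\<forall>\<^sub>F d in at_right 0.
      diag_onb B (\<lambda>b. sqrt (\<mu> b + d)) = P_pd (psd_set \<inter> K) (outer x x + d *\<^sub>R mat 1)"
    using eventually_at_right_less[of 0]
  proof (rule eventually_mono)
    fix d :: real assume "0 < d"
    then show "diag_onb B (\<lambda>b. sqrt (\<mu> b + d)) = P_pd (psd_set \<inter> K) (outer x x + d *\<^sub>R mat 1)"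
      using P_pd_shifted_outer eigenvalue_nonneg by (simp add: add_nonneg_pos)
  qed
  moreover have "((\<lambda>d. diag_onb B (\<lambda>b. sqrt (\<mu> b + d))) \<longlongrightarrow> diag_onb B (\<lambda>b. sqrt (\<mu> b + 0)))
      (at_right 0)"
    unfolding diag_onb_def by (intro tendsto_intros)
  ultimately have "((\<lambda>d. P_pd (psd_set \<inter> K) (outer x x + d *\<^sub>R mat 1))
      \<longlongrightarrow> diag_onb B (\<lambda>b. sqrt (\<mu> b))) (at_right 0)"
    by (simp add: tendsto_cong)
  then show ?thesis
    using False by (simp add: P_H_def tendsto_Lim)
qed

lemma inner_pinv_sqrt: "x \<bullet> (diag_onb B (\<lambda>b. pinv_sqrt (\<mu> b)) *v x) = (\<Sum>b\<in>B. sqrt (\<mu> b))"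
  using sum_eigenvalue_mult[of pinv_sqrt] eigenvalue_nonneg
  by (simp add: inner_diag_onb mult_pinv_sqrt cong: sum.cong)

lemma H_norm_pinv_sqrt_le_1: "H_norm (psd_set \<inter> K) (diag_onb B (\<lambda>b. pinv_sqrt (\<mu> b)) *v x) \<le> 1"
proof (rule H_norm_le_1I)
  let ?R = "diag_onb B (\<lambda>b. pinv_sqrt (\<mu> b))"
  show "0 \<in> psd_set \<inter> K"
    using zero_closed by (simp add: psd_set_def transpose_def vec_eq_iff)
  fix G assume G: "G \<in> psd_set \<inter> K" "trace G \<le> 1"
  have RAR: "?R ** diag_onb B \<mu> ** ?R = diag_onb B (\<lambda>b. if 0 < \<mu> b then 1 else 0)"
    unfolding diag_onb_mult[OF onb]
    by (intro diag_onb_cong) (simp add: pinv_sqrt_sandwich eigenvalue_nonneg)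
  have "(?R *v x) \<bullet> (G *v (?R *v x)) = x \<bullet> ((?R ** G ** ?R) *v x)"
    by (simp add: symmetric_inner_mulv[OF transpose_diag_onb, symmetric] matrix_vector_mul_assoc
        matrix_mul_assoc)
  also have "\<dots> = trace (diag_onb B \<mu> ** (?R ** G ** ?R))"
    using G representer_fun_closed representer_closed
    by (simp add: mult_closed symmetric_inner_eq_trace transpose_diag_onb flip: representer)
  also have "\<dots> = trace (G ** (?R ** diag_onb B \<mu> ** ?R))"
    by (metis matrix_mul_assoc trace_mul_sym)
  also have "\<dots> = (\<Sum>b\<in>B. (if 0 < \<mu> b then 1 else 0) * (b \<bullet> (G *v b)))"
    by (simp add: RAR trace_onb[OF onb] matrix_vector_mul_assoc[symmetric]
        diag_onb_mulv_basis[OF onb] matrix_vector_mult_scaleR)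
  also have "\<dots> \<le> (\<Sum>b\<in>B. b \<bullet> (G *v b))"
    using G(1) by (intro sum_mono) (auto simp: psd_set_def)
  also have "\<dots> \<le> 1"
    using G(2) by (simp add: trace_onb[OF onb, symmetric])
  finally show "(?R *v x) \<bullet> (G *v (?R *v x)) \<le> 1" .
qed

lemma inner_sqrt_le_if_H_norm_le_1:
  assumes "H_norm (psd_set \<inter> K) y \<le> 1"
  shows "y \<bullet> (diag_onb B (\<lambda>b. sqrt (\<mu> b)) *v y) \<le> (\<Sum>b\<in>B. sqrt (\<mu> b))"
    (is "?q \<le> ?t")
proof (cases "?t = 0")
  case True
  then have "\<forall>b\<in>B. sqrt (\<mu> b) = 0"
    using eigenvalue_nonneg by (simp add: sum_nonneg_eq_0_iff[OF onb_finite[OF onb]])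
  then show ?thesis
    using True by (simp add: inner_diag_onb)
next
  case False
  then have "0 < ?t"
    using eigenvalue_nonneg by (simp add: order.not_eq_order_implies_strict sum_nonneg)
  let ?G = "diag_onb B (\<lambda>b. sqrt (\<mu> b) / ?t)"
  have "?G \<in> psd_set \<inter> K"
    using representer_fun_closed[of "\<lambda>s. sqrt s / ?t"] \<open>0 < ?t\<close> eigenvalue_nonneg
    by (simp add: diag_onb_psd)
  moreover have "trace ?G = 1"
    using \<open>0 < ?t\<close> by (simp add: trace_diag_onb[OF onb] sum_divide_distrib[symmetric])
  ultimately have "sqrt (y \<bullet> (?G *v y)) \<le> H_norm (psd_set \<inter> K) y"
    by (intro H_norm_ge) auto
  then have "sqrt (y \<bullet> (?G *v y)) \<le> 1"
    using assms by linarith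
  moreover have "y \<bullet> (?G *v y) = ?q / ?t"
    by (simp add: inner_diag_onb sum_divide_distrib)
  ultimately show ?thesis
    using \<open>0 < ?t\<close> by (simp add: divide_le_eq)
qed

text \<open>Cauchy--Schwarz in the weights \<open>\<mu>\<^sup>-\<^sup>1\<^sup>/\<^sup>2\<close> and \<open>\<mu>\<^sup>1\<^sup>/\<^sup>2\<close>; eigenvectors
  with \<open>\<mu> b = 0\<close> do not contribute because they are orthogonal to \<open>x\<close>.\<close>
lemma inner_le_if_H_norm_le_1:
  assumes "H_norm (psd_set \<inter> K) y \<le> 1"
  shows "x \<bullet> y \<le> (\<Sum>b\<in>B. sqrt (\<mu> b))"
proof -
  let ?t = "\<Sum>b\<in>B. sqrt (\<mu> b)"
  define p where "p b = sqrt (pinv_sqrt (\<mu> b)) * (b \<bullet> x)" for b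
  define q where "q b = sqrt (sqrt (\<mu> b)) * (b \<bullet> y)" for b
  have pq: "(b \<bullet> x) * (b \<bullet> y) = p b * q b" if "b \<in> B" for b
  proof (cases "\<mu> b = 0")
    case True
    then show ?thesis
      using null_eigenvector_orthogonal[OF that] by (simp add: p_def)
  next
    case False
    then have "pinv_sqrt (\<mu> b) * sqrt (\<mu> b) = 1"
      using eigenvalue_nonneg[OF that] by (simp add: pinv_sqrt_def)
    then show ?thesis
      by (simp add: p_def q_def real_sqrt_mult[symmetric] mult_ac)
  qed
  have "x \<bullet> y = (\<Sum>b\<in>B. p b * q b)"
    unfolding inner_onb_expand[OF onb, of x y] using pq by (rule sum.cong[OF refl])
  then have "(x \<bullet> y)\<^sup>2 \<le> (\<Sum>b\<in>B. (p b)\<^sup>2) * (\<Sum>b\<in>B. (q b)\<^sup>2)"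
    by (simp add: Cauchy_Schwarz_ineq_sum)
  also have "(\<Sum>b\<in>B. (p b)\<^sup>2) = x \<bullet> (diag_onb B (\<lambda>b. pinv_sqrt (\<mu> b)) *v x)"
    by (simp add: p_def inner_diag_onb power_mult_distrib pinv_sqrt_nonneg)
  also have "(\<Sum>b\<in>B. (q b)\<^sup>2) = y \<bullet> (diag_onb B (\<lambda>b. sqrt (\<mu> b)) *v y)"
    using eigenvalue_nonneg by (simp add: q_def inner_diag_onb power_mult_distrib cong: sum.cong)
  also have "(x \<bullet> (diag_onb B (\<lambda>b. pinv_sqrt (\<mu> b)) *v x))
      * (y \<bullet> (diag_onb B (\<lambda>b. sqrt (\<mu> b)) *v y)) \<le> ?t * ?t"
    using inner_sqrt_le_if_H_norm_le_1[OF assms] eigenvalue_nonneg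
    by (simp add: inner_pinv_sqrt mult_left_mono sum_nonneg)
  finally have "(x \<bullet> y)\<^sup>2 \<le> ?t\<^sup>2"
    by (simp add: power2_eq_square)
  then show ?thesis
    using eigenvalue_nonneg by (simp add: abs_le_square_iff[symmetric] sum_nonneg abs_le_D1)
qed

lemma H_dual_norm_eq: "H_dual_norm (psd_set \<inter> K) x = (\<Sum>b\<in>B. sqrt (\<mu> b))"
  unfolding H_dual_norm_def
proof (rule cSup_eq_maximum)
  let ?y = "diag_onb B (\<lambda>b. pinv_sqrt (\<mu> b)) *v x"
  have "?y \<bullet> x = (\<Sum>b\<in>B. sqrt (\<mu> b))"
    by (simp add: inner_pinv_sqrt inner_commute)
  then show "(\<Sum>b\<in>B. sqrt (\<mu> b)) \<in> {z \<bullet> x |z. H_norm (psd_set \<inter> K) z \<le> 1}"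
    using H_norm_pinv_sqrt_le_1 by force
  fix w assume "w \<in> {z \<bullet> x |z. H_norm (psd_set \<inter> K) z \<le> 1}"
  then obtain z where "w = z \<bullet> x" "H_norm (psd_set \<inter> K) z \<le> 1"
    by blast
  then show "w \<le> (\<Sum>b\<in>B. sqrt (\<mu> b))"
    using inner_le_if_H_norm_le_1[of z] by (simp add: inner_commute)
qed

end

theorem lemmaA8:
  fixes \<H> :: "('n::finite) sqmat set" and x :: "real^'n"
  assumes "well_structured \<H>"
  shows "H_dual_norm \<H> x = trace (P_H \<H> (outer x x))"
proof -
  obtain K0 where "matrix_algebra K0" and H: "\<H> = psd_set \<inter> K0"
    using assms unfolding well_structured_def matrix_algebra_def by (elim exE conjE) blast
  define K where "K = {X \<in> K0. transpose X \<in> K0}"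
  interpret matrix_algebra K
    unfolding K_def by (rule matrix_algebra.self_adjoint_part[OF \<open>matrix_algebra K0\<close>])
  have H_eq: "\<H> = psd_set \<inter> K"
    using H by (auto simp: K_def psd_set_def)
  obtain A where A: "A \<in> K" "transpose A = A" "\<And>C. C \<in> K \<Longrightarrow> A \<bullet> C = outer x x \<bullet> C"
    using symmetric_representer_exists[OF is_subspace _ transpose_outer] by (auto simp: K_def)
  obtain B \<mu> where B: "orthonormal_basis B" "A = diag_onb B \<mu>"
    using symmetric_eq_diag_onb[OF A(2)] by blast
  interpret outer_representer K x B \<mu>
    by unfold_locales (use A B in \<open>simp_all add: inner_outer_self\<close>)
  show ?thesis
    unfolding H_eq by (simp add: H_dual_norm_eq P_H_outer trace_diag_onb[OF onb])
qed

end
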